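(* Let $G$ and $H$ be connected graphs without isolated vertices such that $\gamma_t(H)=2$ and $\gamma_t(G)=\gamma_t(G\Box H)$. Let $V(H)=\{h_1,\ldots,h_n\}$ and let $D$ be a minimum total dominating set of $G\Box H$. Define $D'=\{(g,h)\in D : \text{there exists } h'\in V(H),\ h'\neq h,\ (g,h')\in D\}$, $D''=D\setminus D'$, and $D''_i=\{(g,h)\in D'': h=h_i\}$ for $i\in\{1,\ldots,n\}$. Let $p_G:V(G\Box H)\to V(G)$, $p_G(g,h)=g$, and set $S=p_G(D)$, $S'=p_G(D')$, $S''=p_G(D'')$, $S''_i=p_G(D''_i)$, $P=N_G(S)\setminus S$, $P'=N_G(S')\setminus S'$, $P''=N_G(S'')\setminus S''$. Then: (A) $S\cup P=V(G)$. (B) $\gamma_t(G)=2|S'|+|S''|$. (C) $S'$ is an independent set and no two vertices of $S'$ have a common neighbor in $G$. (D) There are no edges of $G$ between $S'$ and $S''$. (E) There exists a nonnegative integer $k$ such that $G[S'']$ is isomorphic to $kK_2$. (E') If $T'$ is a minimum-size set of vertices of $G$ that totally dominates $S'$ (i.e. $S'\subseteq N_G(T')$), then $T'\subseteq P'$, $|T'|=|S'|$, and $X=S'\cup T'\cup S''$ is a minimum total dominating set of $G$; moreover, for every $g\in S''$, the set $\mathit{pn}_G(g,X)$ is a subset of $S''$ of size $1$. (F) For every $i\in\{1,\ldots,n\}$ there exists a nonnegative integer $k$ such that $G[S''_i]$ is isomorphic to $kK_2$. (G) For every $i\in\{1,\ldots,n\}$, $S''_i$ totally dominates $P''\cup S''_i$,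 i.e. $P''\cup S''_i\subseteq N_G(S''_i)$. (H) For every $i\in\{1,\ldots,n\}$, no two distinct vertices of $S''_i$ have a common neighbor in $G$. (I) No vertex of $S'$ has a common neighbor in $G$ with a vertex of $S''$. (J) The sets $S'$, $S''$, $P'$, $P''$ are pairwise disjoint. (K) $\gamma_t(G[S'\cup P'])=2\gamma(G[S'\cup P'])=2|S'|$. (L) $\gamma_t(G[S''\cup P''])=|S''|$. (M) If $H$ is not isomorphic to $K_2$, then $S'=\emptyset$.
   Context: All graphs are finite, simple and undirected. $N_G(v)$ is the (open) neighborhood of $v$ and $N_G(X)=\bigcup_{v\in X}N_G(v)$. A set $X\subseteq V(G)$ totally dominates $Y\subseteq V(G)$ if $Y\subseteq N_G(X)$; a total dominating set of a graph $G$ without isolated vertices is a set $S$ with $N_G(S)=V(G)$, and the total domination number $\gamma_t(G)$ is the minimum size of such a set. $\gamma(G)$ is the domination number. $G[X]$ is the subgraph induced by $X$. $kK_2$ is the disjoint union of $k$ copies of $K_2$. The Cartesian product $G\Box H$ has vertex set $V(G)\times V(H)$, with $(u_1,v_1)\sim(u_2,v_2)$ iff either $u_1=u_2$ and $v_1v_2\in E(H)$, or $v_1=v_2$ and $u_1u_2\in E(G)$. For $X\subseteq V(G)$ and $u\in X$, $\mathit{pn}_G(u,X)=\{w\in V(G): N_G(w)\cap X=\{u\}\}$ (the $X$-private neighbors of $u$). *)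

theory Defs
  imports Main
begin

record 'a graph =
  verts :: "'a set"
  adj :: "'a \<Rightarrow> 'a \<Rightarrow> bool"

definition simple_graph :: "'a graph \<Rightarrow> bool" where
  "simple_graph G \<longleftrightarrow> finite (verts G)
     \<and> (\<forall>u v. adj G u v \<longrightarrow> u \<in> verts G \<and> v \<in> verts G)
     \<and> (\<forall>u v. adj G u v \<longrightarrow> adj G v u)
     \<and> (\<forall>u. \<not> adj G u u)"

definition nbhd :: "'a graph \<Rightarrow> 'a \<Rightarrow> 'a set" where
  "nbhd G v = {w \<in> verts G. adj G v w}"

definition nbhd_set :: "'a graph \<Rightarrow> 'a set \<Rightarrow> 'a set" where
  "nbhd_set G X = (\<Union>v\<in>X. nbhd G v)"

definition no_isolated :: "'a graph \<Rightarrow> bool" where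
  "no_isolated G \<longleftrightarrow> (\<forall>v\<in>verts G. nbhd G v \<noteq> {})"

definition connected_graph :: "'a graph \<Rightarrow> bool" where
  "connected_graph G \<longleftrightarrow> verts G \<noteq> {}
     \<and> (\<forall>u\<in>verts G. \<forall>v\<in>verts G. (adj G)\<^sup>*\<^sup>* u v)"

definition independent_set :: "'a graph \<Rightarrow> 'a set \<Rightarrow> bool" where
  "independent_set G S \<longleftrightarrow> S \<subseteq> verts G \<and> (\<forall>u\<in>S. \<forall>v\<in>S. \<not> adj G u v)"

definition total_dominating_set :: "'a graph \<Rightarrow> 'a set \<Rightarrow> bool" where
  "total_dominating_set G S \<longleftrightarrow> S \<subseteq> verts G \<and> nbhd_set G S = verts G"

definition gamma_t :: "'a graph \<Rightarrow> nat" where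
  "gamma_t G = (LEAST k. \<exists>S. total_dominating_set G S \<and> card S = k)"

definition dominating_set :: "'a graph \<Rightarrow> 'a set \<Rightarrow> bool" where
  "dominating_set G S \<longleftrightarrow> S \<subseteq> verts G
     \<and> (\<forall>v\<in>verts G. v \<in> S \<or> nbhd G v \<inter> S \<noteq> {})"

definition gamma :: "'a graph \<Rightarrow> nat" where
  "gamma G = (LEAST k. \<exists>S. dominating_set G S \<and> card S = k)"

definition induced :: "'a graph \<Rightarrow> 'a set \<Rightarrow> 'a graph" where
  "induced G X = \<lparr>verts = X \<inter> verts G, adj = (\<lambda>u v. u \<in> X \<and> v \<in> X \<and> adj G u v)\<rparr>"

definition cart_prod :: "'a graph \<Rightarrow> 'b graph \<Rightarrow> ('a \<times> 'b) graph" where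
  "cart_prod G H = \<lparr>verts = verts G \<times> verts H,
     adj = (\<lambda>(u1, v1) (u2, v2).
        (u1 = u2 \<and> u1 \<in> verts G \<and> adj H v1 v2) \<or> (v1 = v2 \<and> v1 \<in> verts H \<and> adj G u1 u2))\<rparr>"

definition graph_iso :: "'a graph \<Rightarrow> 'b graph \<Rightarrow> bool" where
  "graph_iso G1 G2 \<longleftrightarrow> (\<exists>f. bij_betw f (verts G1) (verts G2)
     \<and> (\<forall>u\<in>verts G1. \<forall>v\<in>verts G1. adj G1 u v \<longleftrightarrow> adj G2 (f u) (f v)))"

definition kK2 :: "nat \<Rightarrow> (nat \<times> bool) graph" where
  "kK2 k = \<lparr>verts = {0..<k} \<times> UNIV,
     adj = (\<lambda>(i, a) (j, b). i = j \<and> i < k \<and> a \<noteq> b)\<rparr>"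

definition K2 :: "bool graph" where
  "K2 = \<lparr>verts = UNIV, adj = (\<lambda>a b. a \<noteq> b)\<rparr>"

definition pn :: "'a graph \<Rightarrow> 'a \<Rightarrow> 'a set \<Rightarrow> 'a set" where
  "pn G u X = {w \<in> verts G. nbhd G w \<inter> X = {u}}"

end

theory Submission
  imports Defs
begin

text \<open>Project \<open>D\<close> to \<open>S \<subseteq> V(G)\<close> and split \<open>S\<close> by whether the column
  \<open>{h. (g, h) \<in> D}\<close> of \<open>g\<close> has several points (\<open>S'\<close>) or one (\<open>S''\<close>), so that
  \<open>2|S'| + |S''| \<le> |D| = \<gamma>\<^sub>t(G)\<close>. A vertex of \<open>G\<close> outside \<open>S'\<close> is dominated from \<open>S\<close>, by
  looking at the layer of \<open>G \<box> H\<close> containing it; hence \<open>S \<union> T\<close> is a total dominating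
  set whenever \<open>T\<close> totally dominates \<open>S'\<close>, and choosing one neighbour for each vertex of
  \<open>S'\<close> gives \<open>\<gamma>\<^sub>t(G) \<le> |S| + |S'| \<le> 2|S'| + |S''|\<close>. Equality throughout forces every
  such choice to be injective and to avoid \<open>S\<close>, and varying the choice gives the local
  structure around \<open>S'\<close>. In the resulting minimum total dominating sets the private
  neighbours of the vertices of \<open>S''\<close> lie in \<open>S''\<close>; finiteness turns this into a perfect
  matching of \<open>S''\<close>, and exchange arguments against minimality give the rest.\<close>

section \<open>Total domination in simple graphs\<close>

lemma simple_graph_finite: "simple_graph G \<Longrightarrow> finite (verts G)"
  and simple_graph_adj_verts: "simple_graph G \<Longrightarrow> adj G u v \<Longrightarrow> u \<in> verts G \<and> v \<in> verts G"
  and simple_graph_sym: "simple_graph G \<Longrightarrow> adj G u v \<Longrightarrow> adj G v u"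
  and simple_graph_irrefl: "simple_graph G \<Longrightarrow> \<not> adj G u u"
  unfolding simple_graph_def by blast+

lemma finite_subset_verts: "simple_graph G \<Longrightarrow> X \<subseteq> verts G \<Longrightarrow> finite X"
  using simple_graph_finite finite_subset by blast

lemma mem_nbhd_set_iff: "w \<in> nbhd_set G X \<longleftrightarrow> w \<in> verts G \<and> (\<exists>x\<in>X. adj G x w)"
  by (auto simp: nbhd_set_def nbhd_def)

lemma common_nbr_in_nbhd_inter:
  "simple_graph G \<Longrightarrow> adj G u w \<Longrightarrow> adj G v w \<Longrightarrow> w \<in> nbhd G u \<inter> nbhd G v"
  unfolding nbhd_def by (blast dest: simple_graph_adj_verts)

lemma total_dominating_setI:
  assumes "simple_graph G" "X \<subseteq> verts G" "\<And>v. v \<in> verts G \<Longrightarrow> \<exists>x\<in>X. adj G x v"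
  shows "total_dominating_set G X"
  using assms simple_graph_adj_verts
  unfolding total_dominating_set_def by (auto simp: mem_nbhd_set_iff)

lemma total_dominating_setD:
  "simple_graph G \<Longrightarrow> total_dominating_set G X \<Longrightarrow> v \<in> verts G \<Longrightarrow> \<exists>x\<in>X. adj G v x"
  unfolding total_dominating_set_def by (metis mem_nbhd_set_iff simple_graph_sym)

lemma gamma_t_le_card: "total_dominating_set G Y \<Longrightarrow> gamma_t G \<le> card Y"
  unfolding gamma_t_def by (rule Least_le) blast

lemma gamma_t_eqI:
  "total_dominating_set G Y \<Longrightarrow> card Y = k \<Longrightarrow> (\<And>Z. total_dominating_set G Z \<Longrightarrow> k \<le> card Z)
    \<Longrightarrow> gamma_t G = k"
  unfolding gamma_t_def by (rule Least_equality) blast+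

lemma gamma_eqI:
  "dominating_set G Y \<Longrightarrow> card Y = k \<Longrightarrow> (\<And>Z. dominating_set G Z \<Longrightarrow> k \<le> card Z)
    \<Longrightarrow> gamma G = k"
  unfolding gamma_def by (rule Least_equality) blast+

lemma verts_induced: "W \<subseteq> verts G \<Longrightarrow> verts (induced G W) = W"
  and adj_induced: "adj (induced G W) u v \<longleftrightarrow> u \<in> W \<and> v \<in> W \<and> adj G u v"
  unfolding induced_def by auto

lemma total_dominating_set_induced_iff:
  assumes "W \<subseteq> verts G"
  shows "total_dominating_set (induced G W) Y \<longleftrightarrow> Y \<subseteq> W \<and> (\<forall>w\<in>W. \<exists>y\<in>Y. adj G y w)"
proof -
  have "nbhd_set (induced G W) Y = {w \<in> W. \<exists>y\<in>Y \<inter> W. adj G y w}"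
    using assms by (auto simp: mem_nbhd_set_iff verts_induced adj_induced)
  then show ?thesis using assms unfolding total_dominating_set_def verts_induced[OF assms] by blast
qed

lemma dominating_set_induced_iff:
  assumes "W \<subseteq> verts G"
  shows "dominating_set (induced G W) Y \<longleftrightarrow> Y \<subseteq> W \<and> (\<forall>v\<in>W. v \<in> Y \<or> (\<exists>y\<in>Y. adj G v y))"
  unfolding dominating_set_def nbhd_def verts_induced[OF assms] adj_induced by blast

lemma card_insert_Diff2_less:
  assumes "finite X" "a \<in> X" "b \<in> X" "a \<noteq> b"
  shows "card (insert w (X - {a, b})) < card X"
proof -
  have "card {a, b} \<le> card X" using assms by (intro card_mono) auto
  then have "2 \<le> card X" using assms(4) by simp
  have "card (insert w (X - {a, b})) \<le> Suc (card (X - {a, b}))"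
    using assms(1) by (simp add: card_insert_if)
  also have "card (X - {a, b}) = card X - 2" using assms by (simp add: card_Diff_subset)
  also have "Suc (card X - 2) < card X" using \<open>2 \<le> card X\<close> by simp
  finally show ?thesis .
qed

lemma iso_K2_if_card_verts_2:
  assumes H: "simple_graph H" "no_isolated H" and card: "card (verts H) = 2"
  shows "graph_iso H K2"
proof -
  obtain a b where ab: "verts H = {a, b}" "a \<noteq> b" using card unfolding card_2_iff by blast
  have "a \<in> verts H" using ab(1) by simp
  then obtain c where c: "c \<in> verts H" "adj H a c"
    using H(2) unfolding no_isolated_def nbhd_def by blast
  then have "c = b" using ab simple_graph_irrefl[OF H(1)] by auto
  then have "adj H a b" "adj H b a" using c simple_graph_sym[OF H(1)] by blast+
  have "bij_betw (\<lambda>x. x = a) (verts H) (verts K2)"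
    unfolding ab K2_def bij_betw_def inj_on_def using ab(2) by auto
  moreover have "\<forall>x\<in>verts H. \<forall>y\<in>verts H. adj H x y \<longleftrightarrow> adj K2 (x = a) (y = a)"
    unfolding ab K2_def using \<open>adj H a b\<close> \<open>adj H b a\<close> simple_graph_irrefl[OF H(1)] ab(2) by auto
  ultimately show ?thesis unfolding graph_iso_def by (intro exI[of _ "\<lambda>x. x = a"] conjI)
qed

lemma min_total_dominator_subset_nbhd_set:
  assumes G: "simple_graph G" and T: "T \<subseteq> verts G" "A \<subseteq> nbhd_set G T"
    and min: "\<And>T'. T' \<subseteq> verts G \<Longrightarrow> A \<subseteq> nbhd_set G T' \<Longrightarrow> card T \<le> card T'"
  shows "T \<subseteq> nbhd_set G A"
proof
  fix t assume t: "t \<in> T"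
  show "t \<in> nbhd_set G A"
  proof (rule ccontr)
    assume t_far: "t \<notin> nbhd_set G A"
    have "A \<subseteq> nbhd_set G (T - {t})"
    proof
      fix a assume a: "a \<in> A"
      then have "a \<in> nbhd_set G T" using T(2) by blast
      then obtain t' where "t' \<in> T" "adj G t' a" "a \<in> verts G"
        unfolding mem_nbhd_set_iff by blast
      moreover have "t' \<noteq> t"
        using t_far a \<open>adj G t' a\<close> T(1) \<open>t' \<in> T\<close> simple_graph_sym[OF G]
        unfolding mem_nbhd_set_iff by blast
      ultimately show "a \<in> nbhd_set G (T - {t})" unfolding mem_nbhd_set_iff by blast
    qed
    then have "card T \<le> card (T - {t})" using min T(1) by blast
    moreover have "finite T" using finite_subset_verts[OF G T(1)] .
    ultimately show False using t card_Diff1_less by fastforce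
  qed
qed

definition some_nbr :: "'a graph \<Rightarrow> 'a \<Rightarrow> 'a" where
  "some_nbr G v = (SOME w. adj G v w)"

lemma adj_some_nbr: "no_isolated G \<Longrightarrow> v \<in> verts G \<Longrightarrow> adj G v (some_nbr G v)"
  unfolding some_nbr_def no_isolated_def nbhd_def by (rule someI_ex) blast

definition min_tds :: "'a graph \<Rightarrow> 'a set \<Rightarrow> bool" where
  "min_tds G X \<longleftrightarrow> total_dominating_set G X \<and> card X = gamma_t G"

lemma min_tds_subset_verts: "min_tds G X \<Longrightarrow> X \<subseteq> verts G"
  unfolding min_tds_def total_dominating_set_def by blast

lemma min_tds_pn_nonempty:
  assumes G: "simple_graph G" and X: "min_tds G X" and x: "x \<in> X"
  shows "pn G x X \<noteq> {}"
proof
  assume no_pn: "pn G x X = {}"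
  have "total_dominating_set G (X - {x})"
  proof (rule total_dominating_setI[OF G])
    show "X - {x} \<subseteq> verts G" using min_tds_subset_verts[OF X] by blast
  next
    fix v assume v: "v \<in> verts G"
    then obtain y where "y \<in> X" "adj G v y"
      using X total_dominating_setD[OF G] unfolding min_tds_def by blast
    moreover have "nbhd G v \<inter> X \<noteq> {x}" using no_pn v unfolding pn_def by blast
    ultimately obtain z where "z \<in> X - {x}" "adj G v z"
      using simple_graph_adj_verts[OF G] unfolding nbhd_def by blast
    then show "\<exists>z\<in>X - {x}. adj G z v" using simple_graph_sym[OF G] by blast
  qed
  then have "gamma_t G \<le> card (X - {x})" by (rule gamma_t_le_card)
  moreover have "finite X"
    using finite_subset_verts[OF G min_tds_subset_verts[OF X]] .
  ultimately show False using X x card_Diff1_less unfolding min_tds_def by fastforce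
qed

text \<open>Index the classes \<open>{u, p u}\<close> by \<open>0..<k\<close> and label \<open>u\<close> by whether it is the chosen
  representative of its class.\<close>
lemma involution_pairing:
  assumes A: "finite A"
    and p: "\<And>u. u \<in> A \<Longrightarrow> p u \<in> A" "\<And>u. u \<in> A \<Longrightarrow> p (p u) = u" "\<And>u. u \<in> A \<Longrightarrow> p u \<noteq> u"
  obtains k :: nat and F :: "'a \<Rightarrow> nat \<times> bool" where "bij_betw F A ({0..<k} \<times> UNIV)"
    and "\<And>u v. u \<in> A \<Longrightarrow> v \<in> A \<Longrightarrow> fst (F u) = fst (F v) \<and> snd (F u) \<noteq> snd (F v) \<longleftrightarrow> v = p u"
proof -
  have same_class: "{u, p u} = {v, p v} \<longleftrightarrow> v = u \<or> v = p u" if "u \<in> A" "v \<in> A" for u v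
    using p(2) that by auto
  define E where "E = (\<lambda>u. {u, p u}) ` A"
  define rep where "rep e = (SOME x. x \<in> e)" for e :: "'a set"
  have rep: "rep {u, v} \<in> {u, v}" for u v
    unfolding rep_def by (rule someI_ex) blast
  have class_in_E: "{u, p u} \<in> E" if "u \<in> A" for u
    unfolding E_def using that by blast
  obtain idx where idx: "bij_betw idx E {0..<card E}"
    using ex_bij_betw_finite_nat A unfolding E_def by blast
  define F where "F u = (idx {u, p u}, u = rep {u, p u})" for u
  have idx_eq: "idx {u, p u} = idx {v, p v} \<longleftrightarrow> v = u \<or> v = p u" if "u \<in> A" "v \<in> A" for u v
    using inj_on_eq_iff[OF bij_betw_imp_inj_on[OF idx] class_in_E class_in_E] that same_class
    by simp
  have partners: "fst (F u) = fst (F v) \<and> snd (F u) \<noteq> snd (F v) \<longleftrightarrow> v = p u"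
    if "u \<in> A" "v \<in> A" for u v
  proof
    assume "v = p u"
    then have "{v, p v} = {u, p u}" "u \<noteq> v" using p(2,3)[OF that(1)] by auto
    then show "fst (F u) = fst (F v) \<and> snd (F u) \<noteq> snd (F v)"
      using rep[of u "p u"] \<open>v = p u\<close> unfolding F_def by auto
  qed (use idx_eq[OF that] in \<open>auto simp: F_def\<close>)
  have "inj_on F A"
    using partners p(3) idx_eq unfolding F_def inj_on_def by (metis prod.inject)
  moreover have "(i, b) \<in> F ` A" if "i < card E" for i b
  proof -
    have "i \<in> idx ` E" using bij_betw_imp_surj_on[OF idx] that by simp
    then obtain u where u: "u \<in> A" "i = idx {u, p u}" unfolding E_def by blast
    define r where "r = rep {u, p u}"
    have "r = u \<or> r = p u" using rep[of u "p u"] unfolding r_def by blast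
    moreover from this have r_A: "r \<in> A" using p(1)[OF u(1)] u(1) by blast
    ultimately have r: "r \<in> A" "{r, p r} = {u, p u}" using same_class[OF u(1) r_A] by simp_all
    then have "{p r, p (p r)} = {u, p u}" using p(2)[OF r(1)] by (simp add: insert_commute)
    then have "F r = (i, True)" "F (p r) = (i, False)"
      using r u(2) p(3)[OF r(1)] unfolding F_def r_def by simp_all
    then show ?thesis using r(1) p(1)[OF r(1)] by (cases b) (metis image_eqI)+
  qed
  moreover have "F ` A \<subseteq> {0..<card E} \<times> UNIV"
    using bij_betwE[OF idx] class_in_E unfolding F_def by auto
  ultimately have "bij_betw F A ({0..<card E} \<times> UNIV)"
    unfolding bij_betw_def by auto
  then show ?thesis using partners by (rule that)
qed

lemma induced_one_regular_iso_kK2: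
  assumes G: "simple_graph G" and A: "A \<subseteq> verts G"
    and one_nbr: "\<And>u. u \<in> A \<Longrightarrow> \<exists>!v. v \<in> A \<and> adj G u v"
  shows "\<exists>k. graph_iso (induced G A) (kK2 k)"
proof -
  define p where "p u = (THE v. v \<in> A \<and> adj G u v)" for u
  have p: "p u \<in> A \<and> adj G u (p u)" if "u \<in> A" for u
    unfolding p_def by (rule theI'[OF one_nbr[OF that]])
  have adj_iff: "adj G u v \<longleftrightarrow> v = p u" if "u \<in> A" "v \<in> A" for u v
  proof
    assume "adj G u v"
    then show "v = p u" unfolding p_def using one_nbr[OF that(1)] that by (simp add: the1_equality)
  qed (use p[OF that(1)] in simp)
  have involution: "p (p u) = u" "p u \<noteq> u" if "u \<in> A" for u
    using p[OF that] adj_iff[OF p[THEN conjunct1, OF that] that] simple_graph_sym[OF G]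
      simple_graph_irrefl[OF G] by metis+
  obtain k :: nat and F :: "_ \<Rightarrow> nat \<times> bool" where F: "bij_betw F A ({0..<k} \<times> UNIV)"
    and partners: "\<And>u v. u \<in> A \<Longrightarrow> v \<in> A \<Longrightarrow>
      fst (F u) = fst (F v) \<and> snd (F u) \<noteq> snd (F v) \<longleftrightarrow> v = p u"
    by (rule involution_pairing[OF finite_subset_verts[OF G A], of p]) (use p involution in blast)+
  have "adj (induced G A) u v \<longleftrightarrow> adj (kK2 k) (F u) (F v)" if "u \<in> A" "v \<in> A" for u v
    using partners[OF that] adj_iff[OF that] bij_betwE[OF F] that
    unfolding adj_induced kK2_def by (auto split: prod.splits)
  then show ?thesis
    using F unfolding graph_iso_def verts_induced[OF A] kK2_def by auto
qed

section \<open>Projecting a minimum total dominating set of \<open>G \<box> H\<close> to \<open>G\<close>\<close>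

locale product_min_tds =
  fixes G :: "'a graph" and H :: "'b graph" and D :: "('a \<times> 'b) set"
  assumes simple_G: "simple_graph G" and simple_H: "simple_graph H"
    and no_isolated_G: "no_isolated G" and no_isolated_H: "no_isolated H"
    and verts_H_nonempty: "verts H \<noteq> {}"
    and tds_D: "total_dominating_set (cart_prod G H) D"
    and gamma_t_G: "gamma_t G = card D"
begin

text \<open>\<open>base\<close>, \<open>base_multi\<close>, \<open>base_single\<close>, \<open>base_single_at h\<close> are the sets
  \<open>S\<close>, \<open>S'\<close>, \<open>S''\<close>, \<open>S''\<^sub>i\<close> (for \<open>h = h\<^sub>i\<close>) of the statement, and \<open>D_multi\<close> is \<open>D'\<close>.\<close>

definition column :: "'a \<Rightarrow> 'b set" where
  "column g = {h. (g, h) \<in> D}"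

definition D_multi :: "('a \<times> 'b) set" where
  "D_multi = {(g, h) \<in> D. \<exists>h'\<in>verts H. h' \<noteq> h \<and> (g, h') \<in> D}"

definition base :: "'a set" where
  "base = fst ` D"

definition base_multi :: "'a set" where
  "base_multi = fst ` D_multi"

definition base_single :: "'a set" where
  "base_single = fst ` (D - D_multi)"

definition base_single_at :: "'b \<Rightarrow> 'a set" where
  "base_single_at hi = fst ` {(g, h) \<in> D - D_multi. h = hi}"

lemma D_subset: "D \<subseteq> verts G \<times> verts H"
  using tds_D unfolding total_dominating_set_def cart_prod_def by simp

lemma column_subset: "column g \<subseteq> verts H"
  using D_subset unfolding column_def by blast

lemma finite_column: "finite (column g)"
  using finite_subset_verts[OF simple_H column_subset] .

lemma mem_base_of_mem_D: "(x, h) \<in> D \<Longrightarrow> x \<in> base"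
  unfolding base_def by force

lemma base_subset: "base \<subseteq> verts G"
  using D_subset unfolding base_def by force

lemma finite_base: "finite base"
  using finite_subset_verts[OF simple_G base_subset] .

lemma mem_base_iff: "g \<in> base \<longleftrightarrow> column g \<noteq> {}"
  unfolding base_def column_def by force

lemma mem_base_multi_iff: "g \<in> base_multi \<longleftrightarrow> (\<exists>h1\<in>column g. \<exists>h2\<in>column g. h1 \<noteq> h2)"
  using D_subset unfolding base_multi_def D_multi_def column_def by force

lemma mem_base_single_at_iff: "g \<in> base_single_at hi \<longleftrightarrow> column g = {hi}"
  using D_subset unfolding base_single_at_def D_multi_def column_def by force

lemma mem_base_single_iff: "g \<in> base_single \<longleftrightarrow> (\<exists>h. column g = {h})"
proof -
  have "base_single = (\<Union>h. base_single_at h)"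
    unfolding base_single_def base_single_at_def by force
  then show ?thesis using mem_base_single_at_iff by blast
qed

lemma base_eq_Un: "base = base_multi \<union> base_single"
proof (intro set_eqI)
  fix g show "g \<in> base \<longleftrightarrow> g \<in> base_multi \<union> base_single"
    unfolding Un_iff mem_base_iff mem_base_multi_iff mem_base_single_iff by blast
qed

lemma base_multi_base_single_disjoint: "base_multi \<inter> base_single = {}"
  by (auto simp: mem_base_multi_iff mem_base_single_iff)

lemma card_D_eq: "card D = (\<Sum>g\<in>base_multi. card (column g)) + card base_single"
proof -
  have "D = Sigma base column" unfolding base_def column_def by force
  then have "card D = card (Sigma base column)" by (rule arg_cong)
  also have "\<dots> = (\<Sum>g\<in>base. card (column g))"
    using finite_base finite_column by simp
  also have "\<dots> = (\<Sum>g\<in>base_multi. card (column g)) + (\<Sum>g\<in>base_single. card (column g))"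
    using finite_base base_multi_base_single_disjoint unfolding base_eq_Un
    by (intro sum.union_disjoint) auto
  also have "(\<Sum>g\<in>base_single. card (column g)) = (\<Sum>g\<in>base_single. 1)"
    by (rule sum.cong) (auto simp: mem_base_single_iff)
  finally show ?thesis by simp
qed

lemma two_le_card_column: "g \<in> base_multi \<Longrightarrow> 2 \<le> card (column g)"
  unfolding mem_base_multi_iff
  by (metis card_2_iff card_mono finite_column insert_subset empty_subsetI)

lemma card_D_ge: "2 * card base_multi + card base_single \<le> card D"
proof -
  have "(\<Sum>g\<in>base_multi. 2) \<le> (\<Sum>g\<in>base_multi. card (column g))"
    using two_le_card_column by (rule sum_mono)
  then show ?thesis using card_D_eq by simp
qed

lemma layer_domination:
  assumes v: "v \<in> verts G" and h: "h \<in> verts H" and col: "column v \<subseteq> {h}"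
  shows "\<exists>x. (x, h) \<in> D \<and> adj G x v"
proof -
  have "(v, h) \<in> nbhd_set (cart_prod G H) D"
    using tds_D v h unfolding total_dominating_set_def cart_prod_def by simp
  then obtain x y where xy: "(x, y) \<in> D" "adj (cart_prod G H) (x, y) (v, h)"
    unfolding mem_nbhd_set_iff by auto
  have "\<not> (x = v \<and> adj H y h)"
    using xy(1) col simple_graph_irrefl[OF simple_H] unfolding column_def by blast
  then show ?thesis using xy unfolding cart_prod_def by auto
qed

lemma exists_other_vertex_H: "\<exists>h\<in>verts H. h \<noteq> hi"
proof -
  obtain h where h: "h \<in> verts H" using verts_H_nonempty by blast
  then obtain h' where "adj H h h'"
    using no_isolated_H unfolding no_isolated_def nbhd_def by blast
  then show ?thesis
    using h simple_graph_adj_verts[OF simple_H] simple_graph_irrefl[OF simple_H] by metis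
qed

text \<open>A vertex outside \<open>base\<close> is dominated in every layer, hence from a column other than \<open>{hi}\<close>.\<close>
lemma outside_base_adj_other_column:
  assumes "v \<in> verts G" "v \<notin> base"
  shows "\<exists>x\<in>base. adj G x v \<and> column x \<noteq> {hi}"
proof -
  obtain h where h: "h \<in> verts H" "h \<noteq> hi" using exists_other_vertex_H by blast
  then obtain x where "(x, h) \<in> D" "adj G x v"
    using layer_domination assms mem_base_iff by blast
  then show ?thesis using h(2) unfolding base_def column_def by force
qed

lemma adj_from_base:
  assumes "v \<in> verts G" "v \<notin> base_multi"
  shows "\<exists>x\<in>base. adj G x v"
proof (cases "v \<in> base")
  case True
  then obtain h where "column v = {h}" using assms(2) base_eq_Un mem_base_single_iff by blast
  then obtain x where "(x, h) \<in> D" "adj G x v"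
    using layer_domination[OF assms(1)] column_subset by blast
  then show ?thesis unfolding base_def by force
qed (use outside_base_adj_other_column assms in blast)

lemma total_dominating_set_base_Un:
  assumes "T \<subseteq> verts G" "base_multi \<subseteq> nbhd_set G T"
  shows "total_dominating_set G (base \<union> T)"
proof (rule total_dominating_setI[OF simple_G])
  show "base \<union> T \<subseteq> verts G" using base_subset assms(1) by blast
next
  fix v assume v: "v \<in> verts G"
  show "\<exists>x\<in>base \<union> T. adj G x v"
  proof (cases "v \<in> base_multi")
    case True
    then have "v \<in> nbhd_set G T" using assms(2) by blast
    then show ?thesis unfolding mem_nbhd_set_iff by blast
  next
    case False
    then show ?thesis using adj_from_base[OF v] by blast
  qed
qed

text \<open>The counting bound \<open>2 |base_multi| + |base_single| \<le> |D| = \<gamma>\<^sub>t(G)\<close> leaves no slack.\<close>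
lemma small_dominator_of_base_multi:
  assumes T: "T \<subseteq> verts G" "base_multi \<subseteq> nbhd_set G T" and card_T: "card T \<le> card base_multi"
  shows "card T = card base_multi" "base \<inter> T = {}" "min_tds G (base \<union> T)"
    and "gamma_t G = 2 * card base_multi + card base_single"
proof -
  have "finite T" using finite_subset_verts[OF simple_G T(1)] .
  then have "card (base \<union> T) + card (base \<inter> T) = card base_multi + card base_single + card T"
    using card_Un_Int[OF finite_base] base_multi_base_single_disjoint finite_base
    unfolding base_eq_Un by (simp add: card_Un_disjoint)
  moreover have "gamma_t G \<le> card (base \<union> T)"
    using gamma_t_le_card total_dominating_set_base_Un[OF T] by blast
  ultimately have "card (base \<inter> T) = 0" "card T = card base_multi" "card (base \<union> T) = gamma_t G"
    and "gamma_t G = 2 * card base_multi + card base_single"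
    using card_T card_D_ge gamma_t_G by linarith+
  then show "card T = card base_multi" "base \<inter> T = {}" "min_tds G (base \<union> T)"
    "gamma_t G = 2 * card base_multi + card base_single"
    using \<open>finite T\<close> total_dominating_set_base_Un[OF T] unfolding min_tds_def by auto
qed

lemma base_multi_subset: "base_multi \<subseteq> verts G"
  and finite_base_multi: "finite base_multi"
  and finite_base_single: "finite base_single"
  using base_subset finite_base base_eq_Un by auto

lemma nbr_choice_dominates_base_multi:
  assumes f: "\<And>u. u \<in> base_multi \<Longrightarrow> adj G u (f u)"
  shows "f ` base_multi \<subseteq> verts G" "base_multi \<subseteq> nbhd_set G (f ` base_multi)"
    and "card (f ` base_multi) \<le> card base_multi"
  using f simple_graph_adj_verts[OF simple_G] simple_graph_sym[OF simple_G]
    card_image_le[OF finite_base_multi] by (fastforce simp: mem_nbhd_set_iff)+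

lemma nbr_choice_min_tds:
  assumes f: "\<And>u. u \<in> base_multi \<Longrightarrow> adj G u (f u)"
  shows "inj_on f base_multi" "f ` base_multi \<inter> base = {}" "min_tds G (base \<union> f ` base_multi)"
proof -
  note tight = small_dominator_of_base_multi[OF nbr_choice_dominates_base_multi[OF f]]
  show "inj_on f base_multi" using eq_card_imp_inj_on[OF finite_base_multi tight(1)] .
  show "f ` base_multi \<inter> base = {}" "min_tds G (base \<union> f ` base_multi)"
    using tight(2,3) by blast+
qed

lemma adj_some_nbr_base_multi: "u \<in> base_multi \<Longrightarrow> adj G u (some_nbr G u)"
  using adj_some_nbr[OF no_isolated_G] base_multi_subset by blast

lemma min_tds_base_Un_some_nbr: "min_tds G (base \<union> some_nbr G ` base_multi)"
  by (rule nbr_choice_min_tds(3)[of "some_nbr G", OF adj_some_nbr_base_multi])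

lemma gamma_t_G_eq: "gamma_t G = 2 * card base_multi + card base_single"
  by (rule small_dominator_of_base_multi(4)[OF
        nbr_choice_dominates_base_multi[of "some_nbr G", OF adj_some_nbr_base_multi]])

text \<open>Redirect the neighbour chosen for \<open>u\<close> to \<open>v\<close>.\<close>
lemma base_multi_not_adj_base:
  assumes u: "u \<in> base_multi" and v: "v \<in> base"
  shows "\<not> adj G u v"
proof
  assume "adj G u v"
  then have "(some_nbr G)(u := v) ` base_multi \<inter> base = {}"
    by (intro nbr_choice_min_tds(2)) (simp add: adj_some_nbr_base_multi)
  moreover have "((some_nbr G)(u := v)) u \<in> (some_nbr G)(u := v) ` base_multi"
    using u by (rule imageI)
  ultimately show False using v by auto
qed

text \<open>Choose a common neighbour for both \<open>u\<close> and \<open>v\<close>; the choice is then not injective.\<close>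
lemma base_multi_no_common_nbr:
  assumes u: "u \<in> base_multi" and v: "v \<in> base_multi" and "u \<noteq> v"
  shows "nbhd G u \<inter> nbhd G v = {}"
proof (rule ccontr)
  assume "nbhd G u \<inter> nbhd G v \<noteq> {}"
  then obtain w where "adj G u w" "adj G v w" unfolding nbhd_def by blast
  then have "inj_on ((some_nbr G)(u := w, v := w)) base_multi"
    by (intro nbr_choice_min_tds(1)) (simp add: adj_some_nbr_base_multi)
  moreover have "((some_nbr G)(u := w, v := w)) u = ((some_nbr G)(u := w, v := w)) v"
    using \<open>u \<noteq> v\<close> by simp
  ultimately have "u = v" using u v by (rule inj_onD)
  with \<open>u \<noteq> v\<close> show False by contradiction
qed

lemma base_single_subset: "base_single \<subseteq> verts G"
  and base_single_at_subset: "base_single_at h \<subseteq> base_single"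
  using base_subset base_eq_Un mem_base_single_iff mem_base_single_at_iff by auto

lemma pn_base_single_subset:
  assumes X: "min_tds G X" "base \<subseteq> X" and g: "g \<in> base_single"
  shows "pn G g X \<subseteq> base_single"
proof
  fix w assume "w \<in> pn G g X"
  then have w: "w \<in> verts G" "adj G w g" and only_g: "\<And>y. y \<in> X \<Longrightarrow> adj G w y \<Longrightarrow> y = g"
    using min_tds_subset_verts[OF X(1)] unfolding pn_def nbhd_def by blast+
  obtain hg where hg: "column g = {hg}" using g mem_base_single_iff by blast
  have "g \<in> base" using g base_eq_Un by blast
  then have "w \<notin> base_multi" using base_multi_not_adj_base w(2) by blast
  moreover have "w \<in> base"
  proof (rule ccontr)
    assume "w \<notin> base"
    then obtain x where "x \<in> base" "adj G x w" "column x \<noteq> {hg}"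
      using outside_base_adj_other_column[OF w(1)] by blast
    then show False using only_g X(2) hg simple_graph_sym[OF simple_G] by blast
  qed
  ultimately show "w \<in> base_single" using base_eq_Un by blast
qed

text \<open>Choosing a private neighbour for each vertex of \<open>base_single\<close> gives an injection of the
  finite set \<open>base_single\<close> into itself, hence a bijection.\<close>
lemma base_single_in_pn:
  assumes X: "min_tds G X" "base \<subseteq> X" and w: "w \<in> base_single"
  shows "\<exists>g\<in>base_single. w \<in> pn G g X"
proof -
  have "\<forall>g\<in>base_single. \<exists>w. w \<in> pn G g X"
    using min_tds_pn_nonempty[OF simple_G X(1)] X(2) base_eq_Un by blast
  then obtain \<phi> where \<phi>: "\<And>g. g \<in> base_single \<Longrightarrow> \<phi> g \<in> pn G g X" by metis
  have "\<phi> ` base_single \<subseteq> base_single" using \<phi> pn_base_single_subset[OF X] by blast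
  moreover have "inj_on \<phi> base_single"
  proof (rule inj_onI)
    fix g g' assume g: "g \<in> base_single" "g' \<in> base_single" and eq: "\<phi> g = \<phi> g'"
    have "nbhd G (\<phi> g) \<inter> X = {g}" "nbhd G (\<phi> g) \<inter> X = {g'}"
      using \<phi>[OF g(1)] \<phi>[OF g(2)] eq unfolding pn_def by auto
    then show "g = g'" by simp
  qed
  ultimately have "\<phi> ` base_single = base_single"
    using finite_base_single endo_inj_surj by blast
  then show ?thesis using \<phi> w by (metis imageE)
qed

lemma base_single_unique_nbr:
  assumes w: "w \<in> base_single"
  shows "\<exists>!g. g \<in> base_single \<and> adj G w g"
proof -
  let ?X = "base \<union> some_nbr G ` base_multi"
  obtain g where g: "g \<in> base_single" "nbhd G w \<inter> ?X = {g}"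
    using base_single_in_pn[OF min_tds_base_Un_some_nbr Un_upper1 w] unfolding pn_def by blast
  have "g' = g" if "g' \<in> base_single" "adj G w g'" for g'
    using g(2) that base_eq_Un simple_graph_adj_verts[OF simple_G] unfolding nbhd_def by blast
  moreover have "adj G w g" using g(2) unfolding nbhd_def by blast
  ultimately show ?thesis using g(1) by blast
qed

definition partner :: "'a \<Rightarrow> 'a" where
  "partner w = (THE g. g \<in> base_single \<and> adj G w g)"

lemma partner: "w \<in> base_single \<Longrightarrow> partner w \<in> base_single \<and> adj G w (partner w)"
  unfolding partner_def by (rule theI'[OF base_single_unique_nbr])

lemma partner_eqI: "w \<in> base_single \<Longrightarrow> g \<in> base_single \<Longrightarrow> adj G w g \<Longrightarrow> partner w = g"
  unfolding partner_def using base_single_unique_nbr by (blast intro: the1_equality)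

lemma partner_partner: "w \<in> base_single \<Longrightarrow> partner (partner w) = w"
  using partner partner_eqI simple_graph_sym[OF simple_G] by blast

lemma nbhd_base_single_inter_min_tds:
  assumes X: "min_tds G X" "base \<subseteq> X" and w: "w \<in> base_single"
  shows "nbhd G w \<inter> X = {partner w}"
proof -
  obtain g where g: "g \<in> base_single" "nbhd G w \<inter> X = {g}"
    using base_single_in_pn[OF X w] unfolding pn_def by blast
  then have "partner w = g" using partner_eqI[OF w] unfolding nbhd_def by blast
  then show ?thesis using g(2) by simp
qed

lemma pn_base_single_eq:
  assumes X: "min_tds G X" "base \<subseteq> X" and g: "g \<in> base_single"
  shows "pn G g X = {partner g}"
proof
  show "pn G g X \<subseteq> {partner g}"
  proof
    fix w assume w: "w \<in> pn G g X"
    then have "w \<in> base_single" using pn_base_single_subset[OF X g] by blast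
    moreover have "adj G w g" using w unfolding pn_def nbhd_def by blast
    ultimately have "partner w = g" using partner_eqI g by blast
    then show "w \<in> {partner g}" using partner_partner[OF \<open>w \<in> base_single\<close>] by simp
  qed
next
  have "nbhd G (partner g) \<inter> X = {g}"
    using nbhd_base_single_inter_min_tds[OF X] partner[OF g] partner_partner[OF g] by metis
  then show "{partner g} \<subseteq> pn G g X"
    using partner[OF g] base_single_subset unfolding pn_def by blast
qed

lemma base_single_at_of_mem_D:
  assumes "x \<in> base_single" "(x, h) \<in> D"
  shows "x \<in> base_single_at h"
proof -
  obtain h' where "column x = {h'}" "h \<in> column x"
    using assms unfolding mem_base_single_iff column_def by auto
  then show ?thesis unfolding mem_base_single_at_iff by simp
qed

lemma partner_base_single_at:
  assumes w: "w \<in> base_single_at h"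
  shows "partner w \<in> base_single_at h"
proof -
  have col: "column w = {h}" using w mem_base_single_at_iff by blast
  have w_single: "w \<in> base_single" using w base_single_at_subset by blast
  then have "w \<in> verts G" "h \<in> verts H" "w \<in> base"
    using base_single_subset col column_subset base_eq_Un by blast+
  then obtain x where x: "(x, h) \<in> D" "adj G x w" using layer_domination col by blast
  have "x \<notin> base_multi" using base_multi_not_adj_base x(2) \<open>w \<in> base\<close> by blast
  then have x_single: "x \<in> base_single" using mem_base_of_mem_D[OF x(1)] base_eq_Un by blast
  have "partner w = x"
    using partner_eqI[OF w_single x_single] x(2) simple_graph_sym[OF simple_G] by blast
  then show ?thesis using base_single_at_of_mem_D[OF x_single x(1)] by simp
qed

lemma base_single_iso_kK2: "\<exists>k. graph_iso (induced G base_single) (kK2 k)"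
  using induced_one_regular_iso_kK2[OF simple_G base_single_subset] base_single_unique_nbr by blast

lemma base_single_at_iso_kK2: "\<exists>k. graph_iso (induced G (base_single_at h)) (kK2 k)"
proof (rule induced_one_regular_iso_kK2[OF simple_G])
  show "base_single_at h \<subseteq> verts G" using base_single_at_subset base_single_subset by blast
next
  fix u assume u: "u \<in> base_single_at h"
  then have "u \<in> base_single" using base_single_at_subset by blast
  show "\<exists>!v. v \<in> base_single_at h \<and> adj G u v"
  proof (rule ex1I)
    show "partner u \<in> base_single_at h \<and> adj G u (partner u)"
      using partner_base_single_at[OF u] partner \<open>u \<in> base_single\<close> by blast
  next
    fix v assume "v \<in> base_single_at h \<and> adj G u v"
    then show "v = partner u"
      using partner_eqI \<open>u \<in> base_single\<close> base_single_at_subset by blast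
  qed
qed


lemma base_multi_base_single_no_common_nbr:
  assumes u: "u \<in> base_multi" and v: "v \<in> base_single"
  shows "nbhd G u \<inter> nbhd G v = {}"
proof (rule ccontr)
  assume "nbhd G u \<inter> nbhd G v \<noteq> {}"
  then obtain w where uw: "adj G u w" and vw: "w \<in> nbhd G v" unfolding nbhd_def by blast
  let ?f = "(some_nbr G)(u := w)"
  have X: "min_tds G (base \<union> ?f ` base_multi)"
    using uw by (intro nbr_choice_min_tds(3)) (simp add: adj_some_nbr_base_multi)
  have "?f u \<in> ?f ` base_multi" using u by (rule imageI)
  then have "w = partner v"
    using nbhd_base_single_inter_min_tds[OF X Un_upper1 v] vw by auto
  then have "w \<in> base" using partner[OF v] base_eq_Un by blast
  then show False using base_multi_not_adj_base[OF u] uw by blast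
qed

lemma base_single_if_nbrs_in_base_single_at:
  assumes X: "min_tds G X" "base \<subseteq> X" and y: "y \<in> verts G"
    and nbrs: "\<And>x. x \<in> X \<Longrightarrow> adj G y x \<Longrightarrow> x \<in> base_single_at h"
  shows "y \<in> base_single"
proof -
  have "y \<in> base"
  proof (rule ccontr)
    assume "y \<notin> base"
    then obtain x where "x \<in> base" "adj G x y" "column x \<noteq> {h}"
      using outside_base_adj_other_column[OF y] by blast
    then show False
      using nbrs X(2) mem_base_single_at_iff simple_graph_sym[OF simple_G] by blast
  qed
  moreover have "y \<notin> base_multi"
  proof
    assume "y \<in> base_multi"
    obtain x where "x \<in> X" "adj G y x"
      using total_dominating_setD[OF simple_G _ y] X(1) unfolding min_tds_def by blast
    then have "x \<in> base" using nbrs base_single_at_subset base_eq_Un by blast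
    then show False using base_multi_not_adj_base \<open>y \<in> base_multi\<close> \<open>adj G y x\<close> by blast
  qed
  ultimately show ?thesis using base_eq_Un by blast
qed

lemma total_dominating_set_trade_partners:
  assumes u: "u \<in> base_single_at h" and v: "v \<in> base_single_at h"
    and w: "w \<in> verts G" "adj G u w" "adj G v w"
  shows "total_dominating_set G
    (insert w ((base \<union> some_nbr G ` base_multi) - {partner u, partner v}))"
    (is "total_dominating_set G (insert w (?X - ?uv'))")
proof (rule total_dominating_setI[OF simple_G])
  show "insert w (?X - ?uv') \<subseteq> verts G"
    using w(1) min_tds_subset_verts[OF min_tds_base_Un_some_nbr] by blast
next
  have single: "u \<in> base_single" "v \<in> base_single" using u v base_single_at_subset by blast+
  fix y assume y: "y \<in> verts G"
  show "\<exists>x\<in>insert w (?X - ?uv'). adj G x y"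
  proof (cases "\<exists>x\<in>?X - ?uv'. adj G x y")
    case False
    then have nbrs: "\<And>x. x \<in> ?X \<Longrightarrow> adj G y x \<Longrightarrow> x \<in> ?uv'"
      using simple_graph_sym[OF simple_G] by blast
    have "x \<in> base_single_at h" if "x \<in> ?X" "adj G y x" for x
      using nbrs[OF that] partner_base_single_at[OF u] partner_base_single_at[OF v] by auto
    then have "y \<in> base_single"
      by (rule base_single_if_nbrs_in_base_single_at[OF min_tds_base_Un_some_nbr Un_upper1 y])
    then have "partner y \<in> ?uv'" using nbrs partner base_eq_Un by blast
    then have "y \<in> {partner (partner u), partner (partner v)}"
      using partner_partner[OF \<open>y \<in> base_single\<close>] by force
    then have "y \<in> {u, v}" using partner_partner[OF single(1)] partner_partner[OF single(2)] by simp
    then show ?thesis using w simple_graph_sym[OF simple_G] by blast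
  qed blast
qed

lemma base_single_at_no_common_nbr:
  assumes u: "u \<in> base_single_at h" and v: "v \<in> base_single_at h" and "u \<noteq> v"
  shows "nbhd G u \<inter> nbhd G v = {}"
proof (rule ccontr)
  assume "nbhd G u \<inter> nbhd G v \<noteq> {}"
  then obtain w where w: "w \<in> verts G" "adj G u w" "adj G v w" unfolding nbhd_def by blast
  define X where "X = base \<union> some_nbr G ` base_multi"
  have single: "u \<in> base_single" "v \<in> base_single" using u v base_single_at_subset by blast+
  then have "partner u \<in> X" "partner v \<in> X" using partner base_eq_Un unfolding X_def by blast+
  moreover have "partner u \<noteq> partner v"
    using partner_partner[OF single(1)] partner_partner[OF single(2)] \<open>u \<noteq> v\<close> by metis
  moreover have "finite X"
    using finite_subset_verts[OF simple_G min_tds_subset_verts[OF min_tds_base_Un_some_nbr]]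
    unfolding X_def .
  ultimately have "card (insert w (X - {partner u, partner v})) < card X"
    by (intro card_insert_Diff2_less)
  moreover have "gamma_t G \<le> card (insert w (X - {partner u, partner v}))"
    using gamma_t_le_card total_dominating_set_trade_partners[OF u v w] unfolding X_def by blast
  ultimately show False using min_tds_base_Un_some_nbr unfolding min_tds_def X_def by simp
qed

lemma base_single_at_dominates:
  assumes h: "h \<in> verts H"
  shows "(nbhd_set G base_single - base_single) \<union> base_single_at h \<subseteq> nbhd_set G (base_single_at h)"
proof
  fix p assume p: "p \<in> (nbhd_set G base_single - base_single) \<union> base_single_at h"
  show "p \<in> nbhd_set G (base_single_at h)"
  proof (cases "p \<in> base_single_at h")
    case True
    then have "partner p \<in> base_single_at h" "adj G (partner p) p" "p \<in> verts G"
      using partner_base_single_at partner base_single_at_subset base_single_subset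
        simple_graph_sym[OF simple_G] by blast+
    then show ?thesis unfolding mem_nbhd_set_iff by blast
  next
    case False
    then have "p \<in> nbhd_set G base_single" "p \<notin> base_single" using p by blast+
    then obtain s where s: "s \<in> base_single" "adj G s p" and p_V: "p \<in> verts G"
      unfolding mem_nbhd_set_iff by blast
    have "p \<notin> base_multi"
      using base_multi_not_adj_base s base_eq_Un simple_graph_sym[OF simple_G] by blast
    then have "column p = {}" using \<open>p \<notin> base_single\<close> base_eq_Un mem_base_iff by blast
    then obtain x where x: "(x, h) \<in> D" "adj G x p" using layer_domination[OF p_V h] by blast
    have "x \<notin> base_multi"
      using base_multi_base_single_no_common_nbr s x(2) common_nbr_in_nbhd_inter[OF simple_G]
      by blast
    then have "x \<in> base_single_at h"
      using base_single_at_of_mem_D x(1) mem_base_of_mem_D base_eq_Un by blast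
    then show ?thesis using x(2) p_V unfolding mem_nbhd_set_iff by blast
  qed
qed

lemma min_dominator_of_base_multi:
  assumes T: "T \<subseteq> verts G" "base_multi \<subseteq> nbhd_set G T"
    and min: "\<And>T'. T' \<subseteq> verts G \<Longrightarrow> base_multi \<subseteq> nbhd_set G T' \<Longrightarrow> card T \<le> card T'"
  shows "T \<subseteq> nbhd_set G base_multi - base_multi \<and> card T = card base_multi
    \<and> total_dominating_set G (base_multi \<union> T \<union> base_single)
    \<and> card (base_multi \<union> T \<union> base_single) = gamma_t G
    \<and> (\<forall>g\<in>base_single. pn G g (base_multi \<union> T \<union> base_single) \<subseteq> base_single
          \<and> card (pn G g (base_multi \<union> T \<union> base_single)) = 1)"
proof -
  note dom = nbr_choice_dominates_base_multi[of "some_nbr G", OF adj_some_nbr_base_multi]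
  have "card T \<le> card base_multi" using min[OF dom(1,2)] dom(3) by linarith
  note tight = small_dominator_of_base_multi[OF T this]
  have "T \<subseteq> nbhd_set G base_multi" by (rule min_total_dominator_subset_nbhd_set[OF simple_G T min])
  moreover have "base_multi \<union> T \<union> base_single = base \<union> T" using base_eq_Un by blast
  ultimately show ?thesis
    using tight pn_base_single_eq[OF tight(3) Un_upper1] partner base_eq_Un
    unfolding min_tds_def by auto
qed

lemma base_Un_nbhd_set_base: "base \<union> nbhd_set G base = verts G"
  using base_subset adj_from_base base_eq_Un by (auto simp: mem_nbhd_set_iff)

lemma independent_base_multi: "independent_set G base_multi"
  unfolding independent_set_def using base_multi_subset base_multi_not_adj_base base_eq_Un by blast

lemma base_multi_inter_nbhd_set_base_single: "base_multi \<inter> nbhd_set G base_single = {}"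
  and base_single_inter_nbhd_set_base_multi: "base_single \<inter> nbhd_set G base_multi = {}"
  using base_multi_not_adj_base base_eq_Un simple_graph_sym[OF simple_G]
  by (fastforce simp: mem_nbhd_set_iff)+

lemma nbhd_set_base_multi_inter_nbhd_set_base_single:
  "nbhd_set G base_multi \<inter> nbhd_set G base_single = {}"
  using base_multi_base_single_no_common_nbr common_nbr_in_nbhd_inter[OF simple_G]
  by (fastforce simp: mem_nbhd_set_iff)

lemma total_dominating_set_base_single_Un:
  assumes W: "total_dominating_set (induced G (base_multi \<union> nbhd_set G base_multi)) Y"
  shows "total_dominating_set G (base_single \<union> Y)"
proof -
  let ?W = "base_multi \<union> nbhd_set G base_multi"
  have V: "?W \<subseteq> verts G" using base_multi_subset by (auto simp: mem_nbhd_set_iff)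
  then have Y: "Y \<subseteq> verts G" "\<And>w. w \<in> ?W \<Longrightarrow> \<exists>y\<in>Y. adj G y w"
    using W unfolding total_dominating_set_induced_iff[OF V] by blast+
  show ?thesis
  proof (rule total_dominating_setI[OF simple_G])
    show "base_single \<union> Y \<subseteq> verts G" using base_single_subset Y(1) by blast
  next
    fix v assume v: "v \<in> verts G"
    show "\<exists>x\<in>base_single \<union> Y. adj G x v"
    proof (cases "v \<in> ?W")
      case False
      then obtain x where "x \<in> base" "adj G x v" using adj_from_base[OF v] by blast
      moreover from this have "x \<notin> base_multi" using False v by (auto simp: mem_nbhd_set_iff)
      ultimately show ?thesis using base_eq_Un by blast
    qed (use Y(2) in blast)
  qed
qed

lemma total_dominating_set_base_multi_Un:
  assumes W: "total_dominating_set (induced G (base_single \<union> nbhd_set G base_single)) Y"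
  shows "total_dominating_set G (base_multi \<union> some_nbr G ` base_multi \<union> Y)"
proof -
  let ?W = "base_single \<union> nbhd_set G base_single"
  have V: "?W \<subseteq> verts G" using base_single_subset by (auto simp: mem_nbhd_set_iff)
  then have Y: "Y \<subseteq> verts G" "\<And>w. w \<in> ?W \<Longrightarrow> \<exists>y\<in>Y. adj G y w"
    using W unfolding total_dominating_set_induced_iff[OF V] by blast+
  show ?thesis
  proof (rule total_dominating_setI[OF simple_G])
    show "base_multi \<union> some_nbr G ` base_multi \<union> Y \<subseteq> verts G"
      using base_multi_subset adj_some_nbr_base_multi simple_graph_adj_verts[OF simple_G] Y(1)
      by blast
  next
    fix v assume v: "v \<in> verts G"
    show "\<exists>x\<in>base_multi \<union> some_nbr G ` base_multi \<union> Y. adj G x v"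
    proof (cases "v \<in> ?W")
      case False
      show ?thesis
      proof (cases "v \<in> base_multi")
        case True
        then show ?thesis using adj_some_nbr_base_multi simple_graph_sym[OF simple_G] by blast
      next
        case False
        then obtain x where "x \<in> base" "adj G x v" using adj_from_base[OF v] by blast
        moreover from this have "x \<notin> base_single"
          using \<open>v \<notin> ?W\<close> v by (auto simp: mem_nbhd_set_iff)
        ultimately show ?thesis using base_eq_Un by blast
      qed
    qed (use Y(2) in blast)
  qed
qed

lemma gamma_t_induced_base_multi_nbhd:
  "gamma_t (induced G (base_multi \<union> nbhd_set G base_multi)) = 2 * card base_multi"
proof -
  let ?W = "base_multi \<union> nbhd_set G base_multi"
  have W: "?W \<subseteq> verts G" using base_multi_subset by (auto simp: mem_nbhd_set_iff)
  let ?Y = "base_multi \<union> some_nbr G ` base_multi"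
  show ?thesis
  proof (rule gamma_t_eqI)
    show "total_dominating_set (induced G ?W) ?Y"
      unfolding total_dominating_set_induced_iff[OF W]
      using adj_some_nbr_base_multi base_multi_subset simple_graph_adj_verts[OF simple_G]
        simple_graph_sym[OF simple_G]
      by (fastforce simp: mem_nbhd_set_iff)
  next
    have "card (some_nbr G ` base_multi) = card base_multi"
      using card_image nbr_choice_min_tds(1)[of "some_nbr G", OF adj_some_nbr_base_multi] by blast
    moreover have "base_multi \<inter> some_nbr G ` base_multi = {}"
      using nbr_choice_min_tds(2)[of "some_nbr G", OF adj_some_nbr_base_multi] base_eq_Un by blast
    ultimately show "card ?Y = 2 * card base_multi"
      using finite_base_multi by (simp add: card_Un_disjoint)
  next
    fix Y assume "total_dominating_set (induced G ?W) Y"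
    then have "total_dominating_set G (base_single \<union> Y)"
      by (rule total_dominating_set_base_single_Un)
    then have "gamma_t G \<le> card (base_single \<union> Y)" by (rule gamma_t_le_card)
    also have "\<dots> \<le> card base_single + card Y" by (rule card_Un_le)
    finally show "2 * card base_multi \<le> card Y" using gamma_t_G_eq by linarith
  qed
qed

lemma gamma_induced_base_multi_nbhd:
  "gamma (induced G (base_multi \<union> nbhd_set G base_multi)) = card base_multi"
proof -
  let ?W = "base_multi \<union> nbhd_set G base_multi"
  have W: "?W \<subseteq> verts G" using base_multi_subset by (auto simp: mem_nbhd_set_iff)
  show ?thesis
  proof (rule gamma_eqI)
    show "dominating_set (induced G ?W) base_multi"
      unfolding dominating_set_induced_iff[OF W]
    proof (intro conjI ballI)
      fix v assume "v \<in> ?W"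
      then have "v \<in> base_multi \<or> (\<exists>y\<in>base_multi. adj G y v)"
        unfolding Un_iff mem_nbhd_set_iff by blast
      then show "v \<in> base_multi \<or> (\<exists>y\<in>base_multi. adj G v y)"
        using simple_graph_sym[OF simple_G] by blast
    qed blast
  next
    fix Y assume "dominating_set (induced G ?W) Y"
    then have Y: "Y \<subseteq> ?W" "\<And>v. v \<in> ?W \<Longrightarrow> v \<in> Y \<or> (\<exists>y\<in>Y. adj G v y)"
      unfolding dominating_set_induced_iff[OF W] by blast+
    have "\<exists>y. y \<in> Y \<and> (y = s \<or> adj G s y)" if "s \<in> base_multi" for s
      using Y(2)[of s] that by blast
    then obtain \<psi> where \<psi>: "\<And>s. s \<in> base_multi \<Longrightarrow> \<psi> s \<in> Y \<and> (\<psi> s = s \<or> adj G s (\<psi> s))"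
      by metis
    text \<open>The closed neighbourhoods of the vertices of \<open>base_multi\<close> are pairwise disjoint.\<close>
    have "inj_on \<psi> base_multi"
    proof (rule inj_onI)
      fix s t assume s: "s \<in> base_multi" and t: "t \<in> base_multi" and eq: "\<psi> s = \<psi> t"
      show "s = t"
      proof (rule ccontr)
        assume "s \<noteq> t"
        have "\<not> adj G s t" "\<not> adj G t s"
          using base_multi_not_adj_base s t base_eq_Un by blast+
        moreover have "\<psi> s = s \<or> adj G s (\<psi> s)" "\<psi> s = t \<or> adj G t (\<psi> s)"
          using \<psi>[OF s] \<psi>[OF t] eq by simp_all
        ultimately have "adj G s (\<psi> s)" "adj G t (\<psi> s)" using \<open>s \<noteq> t\<close> by auto
        then show False
          using base_multi_no_common_nbr[OF s t \<open>s \<noteq> t\<close>] common_nbr_in_nbhd_inter[OF simple_G]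
          by blast
      qed
    qed
    moreover have "\<psi> ` base_multi \<subseteq> Y" using \<psi> by blast
    moreover have "finite Y" using finite_subset_verts[OF simple_G] Y(1) W by blast
    ultimately show "card base_multi \<le> card Y" by (rule card_inj_on_le)
  qed simp
qed

lemma gamma_t_induced_base_single_nbhd:
  "gamma_t (induced G (base_single \<union> nbhd_set G base_single)) = card base_single"
proof -
  let ?W = "base_single \<union> nbhd_set G base_single"
  have W: "?W \<subseteq> verts G" using base_single_subset by (auto simp: mem_nbhd_set_iff)
  show ?thesis
  proof (rule gamma_t_eqI)
    show "total_dominating_set (induced G ?W) base_single"
      unfolding total_dominating_set_induced_iff[OF W]
      using partner simple_graph_sym[OF simple_G] by (auto simp: mem_nbhd_set_iff)
  next
    fix Y assume "total_dominating_set (induced G ?W) Y"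
    then have "total_dominating_set G (base_multi \<union> some_nbr G ` base_multi \<union> Y)"
      by (rule total_dominating_set_base_multi_Un)
    then have "gamma_t G \<le> card (base_multi \<union> some_nbr G ` base_multi \<union> Y)"
      by (rule gamma_t_le_card)
    also have "\<dots> \<le> card base_multi + card (some_nbr G ` base_multi) + card Y"
      by (meson add_le_mono1 card_Un_le order_trans)
    finally show "card base_single \<le> card Y"
      using gamma_t_G_eq nbr_choice_dominates_base_multi(3)[of "some_nbr G", OF adj_some_nbr_base_multi]
      by linarith
  qed simp
qed

lemma card_column_base_multi: "u \<in> base_multi \<Longrightarrow> card (column u) = 2"
proof -
  assume u: "u \<in> base_multi"
  have "(\<Sum>g\<in>base_multi. card (column g)) = (\<Sum>g\<in>base_multi. 2)"
    using card_D_eq gamma_t_G gamma_t_G_eq by simp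
  then show ?thesis
    using sum_mono_inv[OF _ _ u finite_base_multi] two_le_card_column by (metis (no_types))
qed

text \<open>Each layer of the neighbour \<open>some_nbr G u \<notin> base\<close> can only be dominated from \<open>u\<close>.\<close>
lemma column_base_multi_eq_verts_H:
  assumes u: "u \<in> base_multi"
  shows "column u = verts H"
proof
  show "verts H \<subseteq> column u"
  proof
    fix h assume h: "h \<in> verts H"
    let ?t = "some_nbr G u"
    have ut: "adj G u ?t" using adj_some_nbr_base_multi[OF u] .
    then have "?t \<in> verts G" "?t \<notin> base"
      using simple_graph_adj_verts[OF simple_G] base_multi_not_adj_base[OF u] by blast+
    then obtain x where x: "(x, h) \<in> D" "adj G x ?t"
      using layer_domination[OF _ h] mem_base_iff by blast
    have "x \<notin> base_single"
      using base_multi_base_single_no_common_nbr[OF u] ut x(2) common_nbr_in_nbhd_inter[OF simple_G]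
      by blast
    then have "x \<in> base_multi" using mem_base_of_mem_D[OF x(1)] base_eq_Un by blast
    then have "x = u"
      using base_multi_no_common_nbr[OF _ u] ut x(2) common_nbr_in_nbhd_inter[OF simple_G] by blast
    then show "h \<in> column u" using x(1) unfolding column_def by simp
  qed
qed (rule column_subset)

lemma base_multi_empty_unless_iso_K2:
  assumes "\<not> graph_iso H K2"
  shows "base_multi = {}"
proof
  show "base_multi \<subseteq> {}"
  proof
    fix u assume u: "u \<in> base_multi"
    have "card (verts H) = 2"
      using card_column_base_multi[OF u] unfolding column_base_multi_eq_verts_H[OF u] .
    then show "u \<in> {}"
      using iso_K2_if_card_verts_2[OF simple_H no_isolated_H] assms by blast
  qed
qed simp

end

theorem proposition3:
  fixes G :: "'a graph" and H :: "'b graph" and D :: "('a \<times> 'b) set"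
  assumes "simple_graph G" and "simple_graph H"
    and "connected_graph G" and "connected_graph H"
    and "no_isolated G" and "no_isolated H"
    and "gamma_t H = 2"
    and "gamma_t G = gamma_t (cart_prod G H)"
    and "total_dominating_set (cart_prod G H) D"
    and "card D = gamma_t (cart_prod G H)"
  defines "D' \<equiv> {(g, h) \<in> D. \<exists>h'\<in>verts H. h' \<noteq> h \<and> (g, h') \<in> D}"
  defines "D'' \<equiv> D - D'"
  defines "S \<equiv> fst ` D"
  defines "S' \<equiv> fst ` D'"
  defines "S'' \<equiv> fst ` D''"
  defines "S''i \<equiv> (\<lambda>hi. fst ` {(g, h) \<in> D''. h = hi})"
  defines "P \<equiv> nbhd_set G S - S"
  defines "P' \<equiv> nbhd_set G S' - S'"
  defines "P'' \<equiv> nbhd_set G S'' - S''"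
  shows
    \<comment> \<open>(A)\<close>
    "S \<union> P = verts G
   \<and> \<comment> \<open>(B)\<close>
     gamma_t G = 2 * card S' + card S''
   \<and> \<comment> \<open>(C)\<close>
     independent_set G S'
   \<and> (\<forall>u\<in>S'. \<forall>v\<in>S'. u \<noteq> v \<longrightarrow> nbhd G u \<inter> nbhd G v = {})
   \<and> \<comment> \<open>(D)\<close>
     (\<forall>u\<in>S'. \<forall>v\<in>S''. \<not> adj G u v)
   \<and> \<comment> \<open>(E)\<close>
     (\<exists>k. graph_iso (induced G S'') (kK2 k))
   \<and> \<comment> \<open>(E')\<close>
     (\<forall>T'. (T' \<subseteq> verts G \<and> S' \<subseteq> nbhd_set G T'
            \<and> (\<forall>T. T \<subseteq> verts G \<and> S' \<subseteq> nbhd_set G T \<longrightarrow> card T' \<le> card T))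
        \<longrightarrow> T' \<subseteq> P' \<and> card T' = card S'
            \<and> total_dominating_set G (S' \<union> T' \<union> S'')
            \<and> card (S' \<union> T' \<union> S'') = gamma_t G
            \<and> (\<forall>g\<in>S''. pn G g (S' \<union> T' \<union> S'') \<subseteq> S''
                        \<and> card (pn G g (S' \<union> T' \<union> S'')) = 1))
   \<and> \<comment> \<open>(F)\<close>
     (\<forall>hi\<in>verts H. \<exists>k. graph_iso (induced G (S''i hi)) (kK2 k))
   \<and> \<comment> \<open>(G)\<close>
     (\<forall>hi\<in>verts H. P'' \<union> S''i hi \<subseteq> nbhd_set G (S''i hi))
   \<and> \<comment> \<open>(H)\<close>
     (\<forall>hi\<in>verts H. \<forall>u\<in>S''i hi. \<forall>v\<in>S''i hi. u \<noteq> v \<longrightarrow> nbhd G u \<inter> nbhd G v = {})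
   \<and> \<comment> \<open>(I)\<close>
     (\<forall>u\<in>S'. \<forall>v\<in>S''. nbhd G u \<inter> nbhd G v = {})
   \<and> \<comment> \<open>(J)\<close>
     S' \<inter> S'' = {} \<and> S' \<inter> P' = {} \<and> S' \<inter> P'' = {}
   \<and> S'' \<inter> P' = {} \<and> S'' \<inter> P'' = {} \<and> P' \<inter> P'' = {}
   \<and> \<comment> \<open>(K)\<close>
     gamma_t (induced G (S' \<union> P')) = 2 * gamma (induced G (S' \<union> P'))
   \<and> 2 * gamma (induced G (S' \<union> P')) = 2 * card S'
   \<and> \<comment> \<open>(L)\<close>
     gamma_t (induced G (S'' \<union> P'')) = card S''
   \<and> \<comment> \<open>(M)\<close>
     (\<not> graph_iso H K2 \<longrightarrow> S' = {})"
proof -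
  interpret product_min_tds G H D
    using assms(1,2,4,5,6,9) assms(8,10)[symmetric] unfolding connected_graph_def
    by unfold_locales auto
  have defs: "S = base" "S' = base_multi" "S'' = base_single" "S''i h = base_single_at h" for h
    unfolding assms(11-16) base_def base_multi_def base_single_def base_single_at_def D_multi_def
    by simp_all
  have J: "base_multi \<inter> (nbhd_set G base_single - base_single) = {}"
    "base_single \<inter> (nbhd_set G base_multi - base_multi) = {}"
    "(nbhd_set G base_multi - base_multi) \<inter> (nbhd_set G base_single - base_single) = {}"
    using base_multi_inter_nbhd_set_base_single base_single_inter_nbhd_set_base_multi
      nbhd_set_base_multi_inter_nbhd_set_base_single by blast+
  show ?thesis
    unfolding defs assms(17-19) Un_Diff_cancel
  proof (intro conjI)
    show "\<forall>u\<in>base_multi. \<forall>v\<in>base_multi. u \<noteq> v \<longrightarrow> nbhd G u \<inter> nbhd G v = {}"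
      using base_multi_no_common_nbr by blast
    show "\<forall>u\<in>base_multi. \<forall>v\<in>base_single. \<not> adj G u v"
      using base_multi_not_adj_base base_eq_Un by blast
    show "\<forall>hi\<in>verts H. \<exists>k. graph_iso (induced G (base_single_at hi)) (kK2 k)"
      using base_single_at_iso_kK2 by blast
    show "\<forall>hi\<in>verts H. (nbhd_set G base_single - base_single) \<union> base_single_at hi
        \<subseteq> nbhd_set G (base_single_at hi)"
      using base_single_at_dominates by blast
    show "\<forall>hi\<in>verts H. \<forall>u\<in>base_single_at hi. \<forall>v\<in>base_single_at hi.
        u \<noteq> v \<longrightarrow> nbhd G u \<inter> nbhd G v = {}"
      using base_single_at_no_common_nbr by blast
    show "\<forall>u\<in>base_multi. \<forall>v\<in>base_single. nbhd G u \<inter> nbhd G v = {}"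
      using base_multi_base_single_no_common_nbr by blast
    show "\<not> graph_iso H K2 \<longrightarrow> base_multi = {}"
      using base_multi_empty_unless_iso_K2 by blast
    show "\<forall>T'. T' \<subseteq> verts G \<and> base_multi \<subseteq> nbhd_set G T'
        \<and> (\<forall>T. T \<subseteq> verts G \<and> base_multi \<subseteq> nbhd_set G T \<longrightarrow> card T' \<le> card T)
      \<longrightarrow> T' \<subseteq> nbhd_set G base_multi - base_multi \<and> card T' = card base_multi
        \<and> total_dominating_set G (base_multi \<union> T' \<union> base_single)
        \<and> card (base_multi \<union> T' \<union> base_single) = gamma_t G
        \<and> (\<forall>g\<in>base_single. pn G g (base_multi \<union> T' \<union> base_single) \<subseteq> base_single
              \<and> card (pn G g (base_multi \<union> T' \<union> base_single)) = 1)"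
      by (intro allI impI, elim conjE, rule min_dominator_of_base_multi) blast+
  qed (fact J base_Un_nbhd_set_base gamma_t_G_eq independent_base_multi base_single_iso_kK2
      base_multi_base_single_disjoint gamma_t_induced_base_single_nbhd Diff_disjoint
      | simp add: gamma_t_induced_base_multi_nbhd gamma_induced_base_multi_nbhd)+
qed

end
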